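(* Let $B \in C^\infty(\mathbb{R}^3;\mathbb{R}^3)$ and $\Psi \in C^\infty(\mathbb{R}^3;\mathbb{R}^{3\times 3})$ satisfy $\nabla \cdot \Psi = B$ and \[ \bigg( \frac{1}{|B(r)|} \int_{B(r)} \big|\Psi - \Psi_{B(r)}\big|^s \,\mathrm{d}x \bigg)^{\frac 1s} \leq C r^{\frac 13 - \frac 1s}, \qquad r > 1, \] for some $3 < s \leq 6$. Let $R > 1$ and let $\varphi \in C^\infty_c(B(R))$ satisfy $0 \leq \varphi \leq 1$, $\|\varphi\|_{L^1(B(R))} \geq c|B(R)|$, and $|\nabla \varphi| \leq C/R$ for some constants $c > 0$, $C > 0$. Then \[ |B_{\varphi}| \leq \frac{C}{c} R^{-\frac 23 - \frac 1s}, \] where $C$ on the right-hand side is a constant depending only on the constants in the hypotheses.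
   Context: Here $B(r)$ denotes the ball of radius $r$ centered at the origin in $\mathbb{R}^3$. For $f \in L^1_{loc}(\mathbb{R}^3)$, a measurable set $E$, and a cut-off function $\varphi \in C^\infty_c(\mathbb{R}^3)$ with $0 \le \varphi \le 1$, the averages are defined by $f_E := \frac{1}{|E|}\int_E f\,\mathrm{d}x$ and $f_\varphi := \big(\int_{\mathbb{R}^3} \varphi\,\mathrm{d}x\big)^{-1} \int_{\mathbb{R}^3} f\varphi\,\mathrm{d}x$. $\Psi$ is a potential for $B$, i.e. $\mathrm{div}\,\Psi = B$. *)

theory Defs
  imports "HOL-Analysis.Analysis"
begin

definition partial :: "3 \<Rightarrow> (real^3 \<Rightarrow> real) \<Rightarrow> real^3 \<Rightarrow> real" where
  "partial i f x = frechet_derivative f (at x) (axis i 1)"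

definition grad :: "(real^3 \<Rightarrow> real) \<Rightarrow> real^3 \<Rightarrow> real^3" where
  "grad f x = (\<chi> i. partial i f x)"

fun Ck :: "nat \<Rightarrow> (real^3 \<Rightarrow> real) \<Rightarrow> bool" where
  "Ck 0 f = continuous_on UNIV f"
| "Ck (Suc k) f = ((\<forall>x. f differentiable (at x)) \<and> (\<forall>i. Ck k (partial i f)))"

definition smooth :: "(real^3 \<Rightarrow> real) \<Rightarrow> bool" where
  "smooth f \<longleftrightarrow> (\<forall>k. Ck k f)"

definition smooth_vf :: "(real^3 \<Rightarrow> real^3) \<Rightarrow> bool" where
  "smooth_vf F \<longleftrightarrow> (\<forall>i. smooth (\<lambda>x. F x $ i))"

definition smooth_mf :: "(real^3 \<Rightarrow> real^3^3) \<Rightarrow> bool" where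
  "smooth_mf F \<longleftrightarrow> (\<forall>i j. smooth (\<lambda>x. F x $ i $ j))"

definition mdiv :: "(real^3 \<Rightarrow> real^3^3) \<Rightarrow> real^3 \<Rightarrow> real^3" where
  "mdiv F x = (\<chi> i. \<Sum>j\<in>UNIV. partial j (\<lambda>y. F y $ i $ j) x)"

definition avg :: "(real^3) set \<Rightarrow> (real^3 \<Rightarrow> 'a::euclidean_space) \<Rightarrow> 'a" where
  "avg E f = (1 / measure lebesgue E) *\<^sub>R integral E f"

definition wavg :: "(real^3 \<Rightarrow> real) \<Rightarrow> (real^3 \<Rightarrow> 'a::euclidean_space) \<Rightarrow> 'a" where
  "wavg \<phi> f = (1 / integral UNIV \<phi>) *\<^sub>R integral UNIV (\<lambda>x. \<phi> x *\<^sub>R f x)"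

end

theory Submission
  imports Defs
begin

(* Write A for the mean of Psi over B(R). Since B = div Psi and phi has compact support,
   integration by parts against the entries of Psi - A (the constant A has no divergence) gives
     int phi B = - int (Psi - A) grad phi.
   As |grad phi| <= C2/R and grad phi vanishes outside B(R), the right-hand side is at most
   (C2/R) int_B(R) |Psi - A|, and by Hoelder's inequality (in the form of Young's inequality)
   this L^1 mean oscillation is bounded by the L^s one, i.e. by C1 R^(1/3 - 1/s) |B(R)|.
   Dividing by int phi >= c |B(R)| gives the claim with K = C1 C2. *)

lemma integrable_continuous_bounded:
  fixes f :: "'a::euclidean_space \<Rightarrow> 'b::euclidean_space"
  assumes "continuous_on UNIV f" "S \<in> sets lebesgue" "bounded S"
  shows "f integrable_on S"
proof -
  obtain a where "S \<subseteq> cbox (-a) a"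
    using bounded_subset_cbox_symmetric[OF assms(3)] .
  moreover have "f absolutely_integrable_on cbox (-a) a"
    using absolutely_integrable_continuous continuous_on_subset[OF assms(1)] by blast
  ultimately have "f absolutely_integrable_on S"
    using set_integrable_subset assms(2) by blast
  then show ?thesis
    by (rule absolutely_integrable_on_def[THEN iffD1, THEN conjunct1])
qed

lemma integral_UNIV_eq_cbox:
  fixes f :: "'a::euclidean_space \<Rightarrow> 'b::euclidean_space"
  assumes "continuous_on (cbox a b) f" "{x. f x \<noteq> 0} \<subseteq> cbox a b"
  shows "f integrable_on UNIV" "integral UNIV f = integral (cbox a b) f"
proof -
  have "(f has_integral integral (cbox a b) f) UNIV"
    by (rule has_integral_on_superset[OF integrable_integral[OF integrable_continuous]])
       (use assms in auto)
  then show "f integrable_on UNIV" "integral UNIV f = integral (cbox a b) f"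
    by (auto simp: integrable_on_def integral_unique)
qed

lemma integrable_on_UNIV_bounded_support:
  fixes f :: "'a::euclidean_space \<Rightarrow> 'b::euclidean_space"
  assumes "continuous_on UNIV f" "bounded {x. f x \<noteq> 0}"
  shows "f integrable_on UNIV"
proof -
  obtain a where "{x. f x \<noteq> 0} \<subseteq> cbox (-a) a"
    using bounded_subset_cbox_symmetric[OF assms(2)] .
  then show ?thesis
    using integral_UNIV_eq_cbox(1) continuous_on_subset[OF assms(1)] by blast
qed

lemma integrable_on_UNIV_mult_bounded_support:
  fixes f g :: "'a::euclidean_space \<Rightarrow> real"
  assumes "continuous_on UNIV f" "continuous_on UNIV g" "bounded {x. f x \<noteq> 0}"
  shows "(\<lambda>x. f x * g x) integrable_on UNIV"
  using assms by (auto intro!: integrable_on_UNIV_bounded_support continuous_intros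
      elim!: bounded_subset)

lemma integral_translation_UNIV:
  fixes f :: "'a::euclidean_space \<Rightarrow> 'b::euclidean_space"
  assumes "continuous_on UNIV f" "bounded {x. f x \<noteq> 0}"
  shows "integral UNIV (\<lambda>x. f (x + c)) = integral UNIV f"
proof -
  have "bounded ((\<lambda>x. - c + x) ` {x. f x \<noteq> 0})"
    using bounded_translation[OF assms(2)] .
  then obtain a where a: "(\<lambda>x. - c + x) ` {x. f x \<noteq> 0} \<subseteq> cbox (-a) a"
    using bounded_subset_cbox_symmetric by blast
  have "{x. f (x + c) \<noteq> 0} \<subseteq> cbox (-a) a"
    using a by (force simp: image_iff algebra_simps)
  moreover have "{x. f x \<noteq> 0} \<subseteq> cbox (-a + c) (a + c)"
    using a cbox_translation[of c "-a" a] by (force simp: image_iff algebra_simps)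
  ultimately have "integral UNIV (\<lambda>x. f (x + c)) = integral (cbox (-a) a) (\<lambda>x. f (x + c))"
      and "integral UNIV f = integral (cbox (-a + c) (a + c)) f"
    by (auto intro!: integral_UNIV_eq_cbox(2) continuous_on_subset[OF assms(1)]
        continuous_on_compose2[OF assms(1)] continuous_intros)
  moreover have "integral (cbox (-a) a) (\<lambda>x. f (x + c)) = integral (cbox (-a + c) (a + c)) f"
    using integral_shift_cbox[of "-a + c" c "a + c" f] by simp
  ultimately show ?thesis by simp
qed

lemma integral_UNIV_eq_vanishing_outside:
  fixes f :: "'a::euclidean_space \<Rightarrow> 'b::euclidean_space"
  assumes "\<And>x. x \<notin> S \<Longrightarrow> f x = 0"
  shows "integral UNIV f = integral S f"
proof -
  have "f = (\<lambda>x. if x \<in> S then f x else 0)"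
    using assms by auto
  then show ?thesis
    by (metis integral_restrict_UNIV)
qed

lemma continuous_on_matrix_vector_mult [continuous_intros]:
  fixes M :: "'a::topological_space \<Rightarrow> real^'n^'m"
  assumes "continuous_on S M" "continuous_on S v"
  shows "continuous_on S (\<lambda>x. M x *v v x)"
proof -
  have "(\<lambda>x. M x *v v x) = (\<lambda>x. \<chi> i. M x $ i \<bullet> v x)"
    by (simp add: fun_eq_iff vec_eq_iff matrix_vector_mult_def inner_vec_def)
  then show ?thesis
    by (simp only:) (intro continuous_intros assms)
qed

lemma norm_matrix_vector_mult_le:
  fixes A :: "real^'n^'m" and x :: "real^'n"
  shows "norm (A *v x) \<le> norm A * norm x"
proof -
  have "\<bar>(A *v x) $ i\<bar> \<le> norm (A $ i) * norm x" for i
    using Cauchy_Schwarz_ineq2[of "A $ i" x] by (simp add: matrix_vector_mult_def inner_vec_def)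
  then have "norm (A *v x) \<le> L2_set (\<lambda>i. norm (A $ i) * norm x) UNIV"
    unfolding norm_vec_def by (intro L2_set_mono) auto
  also have "\<dots> = norm A * norm x"
    using L2_set_left_distrib[of "norm x" "\<lambda>i. norm (A $ i)" UNIV] by (simp add: norm_vec_def[of A])
  finally show ?thesis .
qed

lemma norm_integral_matrix_vector_mult_le:
  fixes M :: "'a::euclidean_space \<Rightarrow> real^'n^'m" and v :: "'a \<Rightarrow> real^'n"
  assumes M: "continuous_on UNIV M" and v: "continuous_on UNIV v"
    and S: "S \<in> sets lebesgue" "bounded S" and v_out: "\<And>x. x \<notin> S \<Longrightarrow> v x = 0"
    and v_le: "\<And>x. norm (v x) \<le> L"
  shows "norm (integral UNIV (\<lambda>x. M x *v v x)) \<le> L * integral S (\<lambda>x. norm (M x))"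
proof -
  have "norm (integral UNIV (\<lambda>x. M x *v v x)) = norm (integral S (\<lambda>x. M x *v v x))"
    using integral_UNIV_eq_vanishing_outside[of S "\<lambda>x. M x *v v x"] v_out by simp
  also have "\<dots> \<le> integral S (\<lambda>x. L * norm (M x))"
  proof (rule integral_norm_bound_integral)
    show "(\<lambda>x. M x *v v x) integrable_on S" "(\<lambda>x. L * norm (M x)) integrable_on S"
      using S by (auto intro!: integrable_continuous_bounded continuous_intros M v)
    show "norm (M x *v v x) \<le> L * norm (M x)" for x
      using order_trans[OF norm_matrix_vector_mult_le mult_left_mono[OF v_le norm_ge_zero]]
      by (simp add: mult.commute)
  qed
  also have "\<dots> = L * integral S (\<lambda>x. norm (M x))"
    by simp
  finally show ?thesis .
qed

lemma Youngs_inequality_powr: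
  fixes s l u :: real
  assumes s: "1 < s" and l: "0 < l" and u: "0 \<le> u"
  shows "u \<le> l powr (1 - s) / s * u powr s + (1 - 1 / s) * l"
proof -
  define q where "q = s / (s - 1)"
  have q: "1 < q" "1 / s + 1 / q = 1"
    unfolding q_def using s by (simp_all add: field_simps)
  have "(u / l) * 1 \<le> (u / l) powr s / s + 1 powr q / q"
    using u l by (intro Youngs_inequality[OF s q]) auto
  then have "u / l \<le> u powr s / l powr s / s + (1 - 1 / s)"
    using q(2) u l by (simp add: powr_divide)
  then have "u \<le> l * (u powr s / l powr s / s + (1 - 1 / s))"
    using l by (simp add: field_simps)
  also have "\<dots> = l powr (1 - s) / s * u powr s + (1 - 1 / s) * l"
    using l by (simp add: powr_diff field_simps)
  finally show ?thesis .
qed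

lemma integral_le_of_Lp_mean_le:
  fixes f :: "'a::euclidean_space \<Rightarrow> real"
  assumes E: "E \<in> lmeasurable" "0 < measure lebesgue E"
    and f: "f integrable_on E" "(\<lambda>x. f x powr s) integrable_on E" "\<And>x. x \<in> E \<Longrightarrow> 0 \<le> f x"
    and s: "1 < s" and l: "0 < l"
    and mean: "((1 / measure lebesgue E) * integral E (\<lambda>x. f x powr s)) powr (1 / s) \<le> l"
  shows "integral E f \<le> l * measure lebesgue E"
proof -
  define m where "m = measure lebesgue E"
  define X where "X = (1 / m) * integral E (\<lambda>x. f x powr s)"
  have X: "integral E (\<lambda>x. f x powr s) = m * X"
    unfolding X_def m_def using E(2) by simp
  have "0 \<le> X"
    unfolding X_def m_def using E(2) f(2) by (simp add: integral_nonneg)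
  then have "X = (X powr (1 / s)) powr s"
    using s by (simp add: powr_powr)
  also have "\<dots> \<le> l powr s"
    using mean s unfolding X_def m_def by (intro powr_mono2) auto
  finally have X_le: "X \<le> l powr s" .
  have const: "integral E (\<lambda>x. b) = b * m" for b :: real
    using integral_mult[OF integrable_on_const[OF E(1)], of b 1] lmeasure_integral[OF E(1)]
    unfolding m_def by simp
  define a where "a = l powr (1 - s) / s"
  have "integral E f \<le> integral E (\<lambda>x. a * f x powr s + (1 - 1 / s) * l)"
    unfolding a_def using f s l
    by (intro integral_le integrable_add integrable_on_const E(1) integrable_on_cmult_left
        Youngs_inequality_powr) auto
  also have "\<dots> = integral E (\<lambda>x. a * f x powr s) + integral E (\<lambda>x. (1 - 1 / s) * l)"
    using integrable_on_cmult_left[OF f(2), of a]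
    by (intro integral_add integrable_on_const[OF E(1)]) simp
  also have "\<dots> = a * (m * X) + (1 - 1 / s) * l * m"
    by (simp add: X const)
  also have "\<dots> \<le> a * (m * l powr s) + (1 - 1 / s) * l * m"
    unfolding a_def using X_le E(2) s unfolding m_def by (intro add_right_mono mult_left_mono) auto
  also have "\<dots> = l * m"
    unfolding a_def using l s by (simp add: field_simps powr_add[symmetric])
  finally show ?thesis
    unfolding m_def .
qed

lemma frechet_derivative_eq_0_outside_closure_support:
  assumes "x \<notin> closure {x. f x \<noteq> 0}"
  shows "frechet_derivative f (at x) v = 0"
proof -
  have "f y = 0" if "y \<in> - closure {x. f x \<noteq> 0}" for y
    using that closure_subset[of "{x. f x \<noteq> 0}"] by auto
  then have "(f has_derivative (\<lambda>h. 0)) (at x)"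
    using has_derivative_transform_within_open[OF has_derivative_const open_Compl[OF closed_closure]]
      assms by (metis ComplI)
  then show ?thesis
    by (simp add: frechet_derivative_at[symmetric])
qed

lemma has_real_derivative_along_line:
  fixes f :: "'a::real_normed_vector \<Rightarrow> real"
  assumes "f differentiable (at (x + t *\<^sub>R v))"
  shows "((\<lambda>\<tau>. f (x + \<tau> *\<^sub>R v)) has_real_derivative frechet_derivative f (at (x + t *\<^sub>R v)) v) (at t)"
proof -
  let ?f' = "frechet_derivative f (at (x + t *\<^sub>R v))"
  have f': "(f has_derivative ?f') (at (x + t *\<^sub>R v))"
    using frechet_derivative_works assms by blast
  have "((\<lambda>\<tau>. x + \<tau> *\<^sub>R v) has_derivative (\<lambda>d. d *\<^sub>R v)) (at t)"
    by (auto intro!: derivative_eq_intros)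
  from has_derivative_compose[OF this f']
  have "((\<lambda>\<tau>. f (x + \<tau> *\<^sub>R v)) has_derivative (\<lambda>d. ?f' (d *\<^sub>R v))) (at t)" .
  moreover have "(\<lambda>d. ?f' (d *\<^sub>R v)) = (*) (?f' v)"
    using linear_scale[OF has_derivative_linear[OF f']] by (auto simp: mult.commute)
  ultimately show ?thesis
    by (simp add: has_field_derivative_def)
qed

lemma integral_shift_cbox_eq_UNIV:
  fixes h :: "'a::euclidean_space \<Rightarrow> 'b::euclidean_space"
  assumes "continuous_on UNIV h" "bounded {x. h x \<noteq> 0}" "{x. h (x + c) \<noteq> 0} \<subseteq> cbox a b"
  shows "integral (cbox a b) (\<lambda>x. h (x + c)) = integral UNIV h"
proof -
  have "integral (cbox a b) (\<lambda>x. h (x + c)) = integral UNIV (\<lambda>x. h (x + c))"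
    using assms(3)
    by (intro integral_UNIV_eq_cbox(2)[symmetric] continuous_on_compose2[OF assms(1)]
        continuous_intros) auto
  also have "\<dots> = integral UNIV h"
    by (rule integral_translation_UNIV[OF assms(1,2)])
  finally show ?thesis .
qed

lemma has_real_derivative_integral_shift:
  fixes h :: "'a::euclidean_space \<Rightarrow> real"
  assumes diff: "\<And>x. h differentiable (at x)"
    and cont: "continuous_on UNIV (\<lambda>x. frechet_derivative h (at x) v)"
  shows "((\<lambda>t. integral (cbox a b) (\<lambda>x. h (x + t *\<^sub>R v))) has_real_derivative
      integral (cbox a b) (\<lambda>x. frechet_derivative h (at (x + t *\<^sub>R v)) v)) (at t)"
proof -
  have hc: "continuous_on UNIV h"
    using diff by (simp add: differentiable_imp_continuous_within continuous_at_imp_continuous_on)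
  have "((\<lambda>t. integral (cbox a b) (\<lambda>x. h (x + t *\<^sub>R v))) has_real_derivative
      integral (cbox a b) (\<lambda>x. frechet_derivative h (at (x + t *\<^sub>R v)) v)) (at t within UNIV)"
  proof (rule leibniz_rule_field_derivative)
    show "((\<lambda>t. h (x + t *\<^sub>R v)) has_real_derivative frechet_derivative h (at (x + t *\<^sub>R v)) v)
        (at t within UNIV)" for t x
      by (rule has_real_derivative_along_line[OF diff])
    show "(\<lambda>x. h (x + t *\<^sub>R v)) integrable_on cbox a b" for t
      by (intro integrable_continuous continuous_on_compose2[OF hc] continuous_intros) auto
    have "continuous_on UNIV (\<lambda>p. frechet_derivative h (at (snd p + fst p *\<^sub>R v)) v)"
      by (intro continuous_on_compose2[OF cont] continuous_intros) auto
    then show "continuous_on (UNIV \<times> cbox a b)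
        (\<lambda>(t, x). frechet_derivative h (at (x + t *\<^sub>R v)) v)"
      unfolding case_prod_unfold by (rule continuous_on_subset) auto
  qed simp_all
  then show ?thesis
    by simp
qed

lemma norm_le_add_if_shift_le:
  fixes x v :: "'a::real_normed_vector"
  assumes "norm (x + t *\<^sub>R v) \<le> r" "\<bar>t\<bar> \<le> 1"
  shows "norm x \<le> r + norm v"
proof -
  have "norm x \<le> norm (x + t *\<^sub>R v) + \<bar>t\<bar> * norm v"
    using norm_triangle_ineq4[of "x + t *\<^sub>R v" "t *\<^sub>R v"] by simp
  moreover have "\<bar>t\<bar> * norm v \<le> norm v"
    using assms(2) by (simp add: mult_left_le_one_le)
  ultimately show ?thesis
    using assms(1) by linarith
qed

lemma integral_frechet_derivative_eq_0:
  fixes h :: "'a::euclidean_space \<Rightarrow> real"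
  assumes diff: "\<And>x. h differentiable (at x)"
    and cont: "continuous_on UNIV (\<lambda>x. frechet_derivative h (at x) v)"
    and supp: "bounded {x. h x \<noteq> 0}"
  shows "integral UNIV (\<lambda>x. frechet_derivative h (at x) v) = 0"
proof -
  define D where "D x = frechet_derivative h (at x) v" for x
  obtain r where r: "closure {x. h x \<noteq> 0} \<subseteq> cball 0 r"
    using bounded_closure[OF supp] unfolding bounded_iff subset_iff mem_cball_0 by blast
  obtain a where a: "cball (0::'a) (r + norm v) \<subseteq> cbox (-a) a"
    using bounded_subset_cbox_symmetric[OF bounded_cball] .
  have hc: "continuous_on UNIV h"
    using diff by (simp add: differentiable_imp_continuous_within continuous_at_imp_continuous_on)
  \<comment> \<open>F is constant near 0 by translation invariance, while differentiation under the integral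
    sign shows that its derivative at 0 is the integral of D.\<close>
  define F where "F t = integral (cbox (-a) a) (\<lambda>x. h (x + t *\<^sub>R v))" for t
  have F_const: "F t = integral UNIV h" if "t \<in> ball 0 1" for t
  proof (unfold F_def, rule integral_shift_cbox_eq_UNIV[OF hc supp], safe)
    fix x assume "h (x + t *\<^sub>R v) \<noteq> 0"
    then have "x + t *\<^sub>R v \<in> closure {x. h x \<noteq> 0}"
      by (intro closure_subset[THEN subsetD]) simp
    then have "x + t *\<^sub>R v \<in> cball 0 r"
      using r by (rule subsetD[rotated])
    then have "norm x \<le> r + norm v"
      using that by (intro norm_le_add_if_shift_le) auto
    then show "x \<in> cbox (-a) a"
      using a by auto
  qed
  have "(F has_real_derivative integral (cbox (-a) a) D) (at 0)"
    unfolding F_def D_def using has_real_derivative_integral_shift[OF diff cont, of "-a" a 0] by simp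
  moreover have "(F has_real_derivative 0) (at 0)"
    using F_const
    by (intro has_field_derivative_transform_within_open[OF DERIV_const open_ball[of 0 1]]) auto
  ultimately have "integral (cbox (-a) a) D = 0"
    by (rule DERIV_unique)
  moreover have "{x. D x \<noteq> 0} \<subseteq> cbox (-a) a"
  proof -
    have "{x. D x \<noteq> 0} \<subseteq> closure {x. h x \<noteq> 0}"
      unfolding D_def using frechet_derivative_eq_0_outside_closure_support by blast
    also have "\<dots> \<subseteq> cball 0 (r + norm v)"
      using order_trans[OF r subset_cball[of r "r + norm v" 0]] by simp
    finally show ?thesis
      using a by simp
  qed
  ultimately show ?thesis
    using integral_UNIV_eq_cbox(2) continuous_on_subset[OF cont[folded D_def]]
    unfolding D_def[symmetric] by (metis subset_UNIV)
qed

lemma Ck_1_iff: "Ck 1 f \<longleftrightarrow> (\<forall>x. f differentiable (at x)) \<and> (\<forall>i. continuous_on UNIV (partial i f))"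
  by (simp add: One_nat_def)

lemma Ck_1_imp_continuous_on: "Ck 1 f \<Longrightarrow> continuous_on UNIV f"
  by (simp add: Ck_1_iff differentiable_imp_continuous_within continuous_at_imp_continuous_on)

lemma smooth_imp_Ck: "smooth f \<Longrightarrow> Ck k f"
  by (simp add: smooth_def)

lemma partial_mult:
  assumes "f differentiable (at x)" "g differentiable (at x)"
  shows "partial j (\<lambda>y. f y * g y) x = partial j f x * g x + f x * partial j g x"
proof -
  have "((\<lambda>y. f y * g y) has_derivative
      (\<lambda>h. f x * frechet_derivative g (at x) h + frechet_derivative f (at x) h * g x)) (at x)"
    using assms by (intro has_derivative_mult) (simp_all add: frechet_derivative_works)
  then show ?thesis
    unfolding partial_def by (simp add: frechet_derivative_at[symmetric] algebra_simps)
qed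

lemma partial_diff_const:
  assumes "f differentiable (at x)"
  shows "partial j (\<lambda>y. f y - c) x = partial j f x"
proof -
  have "((\<lambda>y. f y - c) has_derivative frechet_derivative f (at x)) (at x)"
    using has_derivative_diff[OF assms[unfolded frechet_derivative_works] has_derivative_const] by simp
  then show ?thesis
    unfolding partial_def by (simp add: frechet_derivative_at[symmetric])
qed

lemma Ck_1_diff_const: "Ck 1 f \<Longrightarrow> Ck 1 (\<lambda>x. f x - c)"
  by (simp add: Ck_1_iff partial_diff_const differentiable_diff)

lemma partial_support_subset: "{x. partial j f x \<noteq> 0} \<subseteq> closure {x. f x \<noteq> 0}"
  unfolding partial_def using frechet_derivative_eq_0_outside_closure_support by blast

lemma integration_by_parts:
  fixes f g :: "real^3 \<Rightarrow> real"
  assumes f: "Ck 1 f" and g: "Ck 1 g" and supp: "bounded {x. f x \<noteq> 0}"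
  shows "integral UNIV (\<lambda>x. f x * partial j g x) = - integral UNIV (\<lambda>x. partial j f x * g x)"
proof -
  have diff: "\<And>x. f differentiable (at x)" "\<And>x. g differentiable (at x)"
    using f g by (simp_all add: Ck_1_iff)
  have cont: "continuous_on UNIV f" "continuous_on UNIV g"
    "continuous_on UNIV (partial j f)" "continuous_on UNIV (partial j g)"
    using f g by (simp_all add: Ck_1_iff Ck_1_imp_continuous_on)
  have prod: "partial j (\<lambda>y. f y * g y) x = partial j f x * g x + f x * partial j g x" for x
    using diff by (rule partial_mult)
  have "bounded {x. partial j f x \<noteq> 0}"
    using partial_support_subset bounded_closure[OF supp] by (rule bounded_subset[rotated])
  then have int1: "(\<lambda>x. partial j f x * g x) integrable_on UNIV"
    using cont by (intro integrable_on_UNIV_mult_bounded_support)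
  have int2: "(\<lambda>x. f x * partial j g x) integrable_on UNIV"
    using cont supp by (intro integrable_on_UNIV_mult_bounded_support)
  have "integral UNIV (\<lambda>x. partial j (\<lambda>y. f y * g y) x) = 0"
    unfolding partial_def
  proof (rule integral_frechet_derivative_eq_0)
    show "(\<lambda>y. f y * g y) differentiable (at x)" for x
      using diff by (rule differentiable_mult)
    show "continuous_on UNIV (\<lambda>x. frechet_derivative (\<lambda>y. f y * g y) (at x) (axis j 1))"
      using prod[unfolded partial_def] by (simp add: continuous_intros cont[unfolded partial_def])
    show "bounded {x. f x * g x \<noteq> 0}"
      using supp by (rule bounded_subset) auto
  qed
  then show ?thesis
    unfolding prod integral_add[OF int1 int2] by linarith
qed

lemma grad_support_subset: "{x. grad f x \<noteq> 0} \<subseteq> closure {x. f x \<noteq> 0}"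
proof
  fix x assume "x \<in> {x. grad f x \<noteq> 0}"
  then obtain j where "partial j f x \<noteq> 0"
    by (auto simp: grad_def vec_eq_iff)
  then show "x \<in> closure {x. f x \<noteq> 0}"
    using partial_support_subset by blast
qed

lemma continuous_on_grad: "Ck 1 f \<Longrightarrow> continuous_on UNIV (grad f)"
  unfolding grad_def[abs_def] by (intro continuous_on_vec_lambda) (simp add: Ck_1_iff)

lemma continuous_on_Ck_1_entries:
  fixes \<Psi> :: "real^3 \<Rightarrow> real^3^3"
  assumes "\<And>i j. Ck 1 (\<lambda>x. \<Psi> x $ i $ j)"
  shows "continuous_on UNIV \<Psi>"
proof -
  have "continuous_on UNIV (\<lambda>x. \<chi> i j. \<Psi> x $ i $ j)"
    using assms by (intro continuous_on_vec_lambda Ck_1_imp_continuous_on)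
  then show ?thesis by simp
qed

lemma continuous_on_mdiv:
  assumes "\<And>i j. Ck 1 (\<lambda>x. \<Psi> x $ i $ j)"
  shows "continuous_on UNIV (mdiv \<Psi>)"
  unfolding mdiv_def[abs_def] using assms
  by (intro continuous_on_vec_lambda continuous_on_sum) (simp add: Ck_1_iff)

lemma integral_mult_mdiv_component:
  fixes \<Psi> :: "real^3 \<Rightarrow> real^3^3" and \<phi> :: "real^3 \<Rightarrow> real" and A :: "real^3^3"
  assumes \<Psi>: "\<And>i j. Ck 1 (\<lambda>x. \<Psi> x $ i $ j)" and \<phi>: "Ck 1 \<phi>" and supp: "bounded {x. \<phi> x \<noteq> 0}"
  shows "integral UNIV (\<lambda>x. \<phi> x * mdiv \<Psi> x $ i)
    = - integral UNIV (\<lambda>x. ((\<Psi> x - A) *v grad \<phi> x) $ i)"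
proof -
  define \<Psi>' where "\<Psi>' j = (\<lambda>x. \<Psi> x $ i $ j - A $ i $ j)" for j
  have \<Psi>': "Ck 1 (\<Psi>' j)" for j
    unfolding \<Psi>'_def using \<Psi> by (rule Ck_1_diff_const)
  have cont: "continuous_on UNIV \<phi>" "continuous_on UNIV (partial j \<phi>)"
    "continuous_on UNIV (\<Psi>' j)" "continuous_on UNIV (partial j (\<Psi>' j))" for j
    using \<phi> \<Psi>' by (simp_all add: Ck_1_iff Ck_1_imp_continuous_on)
  have "bounded {x. partial j \<phi> x \<noteq> 0}" for j
    using partial_support_subset bounded_closure[OF supp] by (rule bounded_subset[rotated])
  then have int: "(\<lambda>x. \<phi> x * partial j (\<Psi>' j) x) integrable_on UNIV"
    "(\<lambda>x. partial j \<phi> x * \<Psi>' j x) integrable_on UNIV" for j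
    using cont supp by (auto intro: integrable_on_UNIV_mult_bounded_support)
  have "integral UNIV (\<lambda>x. \<phi> x * mdiv \<Psi> x $ i)
      = integral UNIV (\<lambda>x. \<Sum>j\<in>UNIV. \<phi> x * partial j (\<Psi>' j) x)"
    using \<Psi> by (simp add: mdiv_def \<Psi>'_def partial_diff_const Ck_1_iff sum_distrib_left)
  also have "\<dots> = (\<Sum>j\<in>UNIV. integral UNIV (\<lambda>x. \<phi> x * partial j (\<Psi>' j) x))"
    using int by (simp add: integral_sum)
  also have "\<dots> = - (\<Sum>j\<in>UNIV. integral UNIV (\<lambda>x. partial j \<phi> x * \<Psi>' j x))"
    using integration_by_parts[OF \<phi> \<Psi>' supp] by (simp add: sum_negf)
  also have "\<dots> = - integral UNIV (\<lambda>x. ((\<Psi> x - A) *v grad \<phi> x) $ i)"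
    using int by (simp add: integral_sum matrix_vector_mult_def grad_def \<Psi>'_def mult.commute)
  finally show ?thesis .
qed

lemma integral_mult_mdiv:
  fixes \<Psi> :: "real^3 \<Rightarrow> real^3^3" and \<phi> :: "real^3 \<Rightarrow> real" and A :: "real^3^3"
  assumes \<Psi>: "\<And>i j. Ck 1 (\<lambda>x. \<Psi> x $ i $ j)" and \<phi>: "Ck 1 \<phi>" and supp: "bounded {x. \<phi> x \<noteq> 0}"
  shows "integral UNIV (\<lambda>x. \<phi> x *\<^sub>R mdiv \<Psi> x) = - integral UNIV (\<lambda>x. (\<Psi> x - A) *v grad \<phi> x)"
proof -
  have "bounded {x. grad \<phi> x \<noteq> 0}"
    using grad_support_subset bounded_closure[OF supp] by (rule bounded_subset[rotated])
  then have int_rhs: "(\<lambda>x. (\<Psi> x - A) *v grad \<phi> x) integrable_on UNIV"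
    by (intro integrable_on_UNIV_bounded_support continuous_intros continuous_on_grad
        continuous_on_Ck_1_entries \<phi> \<Psi>) (auto elim!: bounded_subset)
  have int_lhs: "(\<lambda>x. \<phi> x *\<^sub>R mdiv \<Psi> x) integrable_on UNIV"
    using supp \<phi> by (intro integrable_on_UNIV_bounded_support continuous_intros
        Ck_1_imp_continuous_on continuous_on_mdiv \<Psi>) (auto elim!: bounded_subset)
  show ?thesis
    using integral_mult_mdiv_component[OF \<Psi> \<phi> supp, of _ A]
    by (simp add: vec_eq_iff
        flip: integral_component_eq_cart[OF int_lhs] integral_component_eq_cart[OF int_rhs])
qed

lemma norm_wavg_mdiv_le:
  fixes \<Psi> :: "real^3 \<Rightarrow> real^3^3" and \<phi> :: "real^3 \<Rightarrow> real"
  assumes \<Psi>: "\<And>i j. Ck 1 (\<lambda>x. \<Psi> x $ i $ j)"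
    and s: "1 < s" and R: "0 < R" and M: "0 < M"
    and osc: "((1 / measure lebesgue (ball (0::real^3) R)) *
        integral (ball 0 R) (\<lambda>x. norm (\<Psi> x - avg (ball 0 R) \<Psi>) powr s)) powr (1 / s) \<le> M"
    and \<phi>: "Ck 1 \<phi>" "closure {x. \<phi> x \<noteq> 0} \<subseteq> ball 0 R" "\<And>x. 0 \<le> \<phi> x"
    and c: "0 < c" "c * measure lebesgue (ball (0::real^3) R) \<le> integral (ball 0 R) \<phi>"
    and grad: "\<And>x. norm (grad \<phi> x) \<le> L"
  shows "norm (wavg \<phi> (mdiv \<Psi>)) \<le> L * M / c"
proof -
  have L: "0 \<le> L"
    using order_trans[OF norm_ge_zero grad] .
  define A where "A = avg (ball 0 R) \<Psi>"
  define m where "m = measure lebesgue (ball (0::real^3) R)"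
  have m: "0 < m"
    unfolding m_def using content_ball_pos[OF R] by simp
  have supp_ball: "{x. \<phi> x \<noteq> 0} \<subseteq> ball 0 R"
    using closure_subset \<phi>(2) by (rule order_trans)
  then have supp: "bounded {x. \<phi> x \<noteq> 0}"
    using bounded_ball by (rule bounded_subset[rotated])
  have cont_\<Psi>: "continuous_on UNIV \<Psi>"
    using \<Psi> by (rule continuous_on_Ck_1_entries)
  have "continuous_on UNIV (\<lambda>x. norm (\<Psi> x - A) powr s)"
    by (rule continuous_on_powr') (use s in \<open>auto intro!: continuous_intros cont_\<Psi>\<close>)
  then have int_\<Psi>: "(\<lambda>x. norm (\<Psi> x - A)) integrable_on ball 0 R"
    "(\<lambda>x. norm (\<Psi> x - A) powr s) integrable_on ball 0 R"
    by (auto intro!: integrable_continuous_bounded continuous_intros cont_\<Psi>)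
  have "norm (integral UNIV (\<lambda>x. (\<Psi> x - A) *v grad \<phi> x))
      \<le> L * integral (ball 0 R) (\<lambda>x. norm (\<Psi> x - A))"
    using grad_support_subset[of \<phi>] \<phi>(2) grad
    by (intro norm_integral_matrix_vector_mult_le continuous_intros cont_\<Psi> continuous_on_grad \<phi>(1))
      auto
  also have "\<dots> \<le> L * (M * m)"
    using osc[folded A_def m_def] m L unfolding m_def
    by (intro mult_left_mono integral_le_of_Lp_mean_le[OF _ _ int_\<Psi> _ s M]) auto
  finally have osc_bound: "norm (integral UNIV (\<lambda>x. (\<Psi> x - A) *v grad \<phi> x)) \<le> L * (M * m)" .
  have "integral UNIV \<phi> = integral (ball 0 R) \<phi>"
    by (rule integral_UNIV_eq_vanishing_outside) (use supp_ball in auto)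
  then have mass: "c * m \<le> integral UNIV \<phi>"
    using c(2) unfolding m_def by simp
  have mass_pos: "0 < integral UNIV \<phi>"
    using mass c(1) m by (meson mult_pos_pos order_less_le_trans)
  have "norm (wavg \<phi> (mdiv \<Psi>))
      = norm (integral UNIV (\<lambda>x. (\<Psi> x - A) *v grad \<phi> x)) / integral UNIV \<phi>"
    using mass_pos unfolding wavg_def integral_mult_mdiv[OF \<Psi> \<phi>(1) supp, of A] by simp
  also have "\<dots> \<le> L * (M * m) / (c * m)"
    using osc_bound mass c(1) m L M by (intro frac_le) auto
  also have "\<dots> = L * M / c"
    using m by simp
  finally show ?thesis .
qed

theorem lemma2p3:
  fixes s C1 C2 :: real
  assumes "3 < s" and "s \<le> 6" and "C1 > 0" and "C2 > 0"
  shows "\<exists>K. \<forall>(c::real) (B::real^3 \<Rightarrow> real^3) (\<Psi>::real^3 \<Rightarrow> real^3^3) (R::real) (\<phi>::real^3 \<Rightarrow> real).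
     smooth_vf B \<and> smooth_mf \<Psi> \<and> (\<forall>x. mdiv \<Psi> x = B x) \<and>
     (\<forall>r>1. ((1 / measure lebesgue (ball (0::real^3) r)) *
              integral (ball 0 r) (\<lambda>x. norm (\<Psi> x - avg (ball 0 r) \<Psi>) powr s)) powr (1 / s)
            \<le> C1 * r powr (1/3 - 1/s)) \<and>
     R > 1 \<and> smooth \<phi> \<and> closure {x. \<phi> x \<noteq> 0} \<subseteq> ball 0 R \<and>
     (\<forall>x. 0 \<le> \<phi> x \<and> \<phi> x \<le> 1) \<and> c > 0 \<and>
     integral (ball 0 R) (\<lambda>x. \<bar>\<phi> x\<bar>) \<ge> c * measure lebesgue (ball (0::real^3) R) \<and>
     (\<forall>x. norm (grad \<phi> x) \<le> C2 / R)
     \<longrightarrow> norm (wavg \<phi> B) \<le> K / c * R powr (-(2/3) - 1/s)"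
proof (intro exI[of _ "C1 * C2"] allI impI, elim conjE)
  fix c B \<Psi> R \<phi>
  assume \<Psi>: "smooth_mf \<Psi>" and div: "\<forall>x. mdiv \<Psi> x = B x"
    and osc: "\<forall>r>1. ((1 / measure lebesgue (ball (0::real^3) r)) *
        integral (ball 0 r) (\<lambda>x. norm (\<Psi> x - avg (ball 0 r) \<Psi>) powr s)) powr (1 / s)
      \<le> C1 * r powr (1/3 - 1/s)"
    and R: "R > 1" and \<phi>: "smooth \<phi>" "closure {x. \<phi> x \<noteq> 0} \<subseteq> ball 0 R"
    and \<phi>_bounds: "\<forall>x. 0 \<le> \<phi> x \<and> \<phi> x \<le> 1" and c: "c > 0"
    and mass: "integral (ball 0 R) (\<lambda>x. \<bar>\<phi> x\<bar>) \<ge> c * measure lebesgue (ball (0::real^3) R)"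
    and grad: "\<forall>x. norm (grad \<phi> x) \<le> C2 / R"
  have \<Psi>_Ck: "Ck 1 (\<lambda>x. \<Psi> x $ i $ j)" for i j
    using \<Psi> smooth_imp_Ck unfolding smooth_mf_def by blast
  have mass': "c * measure lebesgue (ball (0::real^3) R) \<le> integral (ball 0 R) \<phi>"
    using mass \<phi>_bounds by simp
  have "norm (wavg \<phi> (mdiv \<Psi>)) \<le> C2 / R * (C1 * R powr (1/3 - 1/s)) / c"
    using R \<phi>_bounds grad assms(1,3)
    by (intro norm_wavg_mdiv_le[OF \<Psi>_Ck _ _ _ osc[rule_format, OF R] smooth_imp_Ck[OF \<phi>(1)] \<phi>(2) _
          c mass']) auto
  moreover have "B = mdiv \<Psi>"
    using div by auto
  moreover have "R powr (-(2/3) - 1/s) = R powr (1/3 - 1/s) / R"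
    using R powr_diff[of R "1/3 - 1/s" 1] by simp
  ultimately show "norm (wavg \<phi> B) \<le> C1 * C2 / c * R powr (-(2/3) - 1/s)"
    by (simp add: field_simps)
qed

end
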